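(* Let $\Pi$ be an equitative protocol for a distribution type $\tau$ and let $\rho$ be a run of $\Pi$. Then there is a constant $\gamma=\gamma(\rho)\in(0,1]$ such that for every deal $H$ of type $\tau$, $\Pr(\rho\mid H)=\gamma$ if $H\in\mathrm{Poss}(\rho)$ and $\Pr(\rho\mid H)=0$ otherwise.
   Context: Let $\mathcal A$ be a finite set of agents listed in speaking order $P_0,\dots,P_m$. A distribution type is a vector $\tau=(\tau_P)_{P\in\mathcal A}$ of positive integers, $|\tau|=\sum_P\tau_P$. The deck $\Omega$ is a set of $|\tau|$ cards; a deal of type $\tau$ is a partition $H=(H_P)_P$ of $\Omega$ with $|H_P|=\tau_P$. Fix a set of tokens; a run is a finite sequence $\rho=a_0,\dots,a_n$ of tokens, $\rho_{<k}=a_0,\dots,a_{k-1}$. A protocol for $\tau$ is a function $\Pi$ assigning to every deal $H$ and run $\rho$ a set of tokens $\Pi(H,\rho)$ such that if $k$ is the remainder of $|\rho|$ modulo $m+1$ and $H_{P_k}=H'_{P_k}$, then $\Pi(H,\rho)=\Pi(H',\rho)$. An execution is a pair $(H,\rho)$ with $a_k\in\Pi(H,\rho_{<k})$ for all $k\le n$; $\rho$ is a run of $\Pi$ if some $(H,\rho)$ is an execution. $\mathrm{Poss}(\rho)$ is the set of deals $H$ such that $(H,\rho)$ is an execution. $\Pi$ is equitative if for every run $\rho$ of $\Pi$ there is $k=k(\rho)$ with $|\Pi(H,\rho)|=k$ for all $H\in\mathrm{Poss}(\rho)$. Probability model: given the deal $H$, starting from the empty run, while $\Pi(H,\rho)\neq\emptyset$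 for the current run $\rho$ a token is drawn uniformly at random from $\Pi(H,\rho)$ and appended; $\Pr(\rho\mid H)$ is the probability that the first $|\rho|$ tokens produced are exactly $\rho$. *)

theory Defs
  imports Main "HOL.Real"
begin

text \<open>Agents are given as a list in speaking order P_0, ..., P_m (distinct, nonempty).
  A distribution type is tau :: 'p => nat (only its values on the agents matter).\<close>

definition is_deal :: "'p list \<Rightarrow> ('p \<Rightarrow> nat) \<Rightarrow> 'c set \<Rightarrow> ('p \<Rightarrow> 'c set) \<Rightarrow> bool" where
  "is_deal agents tau Omega H \<longleftrightarrow>
     (\<forall>P \<in> set agents. H P \<subseteq> Omega \<and> card (H P) = tau P) \<and>
     (\<forall>P \<in> set agents. \<forall>Q \<in> set agents. P \<noteq> Q \<longrightarrow> H P \<inter> H Q = {}) \<and>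
     (\<Union>P \<in> set agents. H P) = Omega \<and>
     (\<forall>P. P \<notin> set agents \<longrightarrow> H P = {})"

text \<open>A protocol: on the turn of agent P_k (k = |rho| mod (m+1)) the set of allowed
  tokens depends only on the hand of P_k.\<close>
definition is_protocol ::
  "'p list \<Rightarrow> ('p \<Rightarrow> nat) \<Rightarrow> 'c set \<Rightarrow> (('p \<Rightarrow> 'c set) \<Rightarrow> 'a list \<Rightarrow> 'a set) \<Rightarrow> bool" where
  "is_protocol agents tau Omega Pi \<longleftrightarrow>
     (\<forall>H H' rho. is_deal agents tau Omega H \<longrightarrow> is_deal agents tau Omega H' \<longrightarrow>
        H (agents ! (length rho mod length agents)) = H' (agents ! (length rho mod length agents)) \<longrightarrow>
        Pi H rho = Pi H' rho)"

definition is_execution ::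
  "'p list \<Rightarrow> ('p \<Rightarrow> nat) \<Rightarrow> 'c set \<Rightarrow> (('p \<Rightarrow> 'c set) \<Rightarrow> 'a list \<Rightarrow> 'a set)
     \<Rightarrow> ('p \<Rightarrow> 'c set) \<Rightarrow> 'a list \<Rightarrow> bool" where
  "is_execution agents tau Omega Pi H rho \<longleftrightarrow>
     is_deal agents tau Omega H \<and> (\<forall>k < length rho. rho ! k \<in> Pi H (take k rho))"

definition is_run ::
  "'p list \<Rightarrow> ('p \<Rightarrow> nat) \<Rightarrow> 'c set \<Rightarrow> (('p \<Rightarrow> 'c set) \<Rightarrow> 'a list \<Rightarrow> 'a set) \<Rightarrow> 'a list \<Rightarrow> bool" where
  "is_run agents tau Omega Pi rho \<longleftrightarrow> (\<exists>H. is_execution agents tau Omega Pi H rho)"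

definition Poss ::
  "'p list \<Rightarrow> ('p \<Rightarrow> nat) \<Rightarrow> 'c set \<Rightarrow> (('p \<Rightarrow> 'c set) \<Rightarrow> 'a list \<Rightarrow> 'a set) \<Rightarrow> 'a list
     \<Rightarrow> ('p \<Rightarrow> 'c set) set" where
  "Poss agents tau Omega Pi rho = {H. is_execution agents tau Omega Pi H rho}"

definition equitative ::
  "'p list \<Rightarrow> ('p \<Rightarrow> nat) \<Rightarrow> 'c set \<Rightarrow> (('p \<Rightarrow> 'c set) \<Rightarrow> 'a list \<Rightarrow> 'a set) \<Rightarrow> bool" where
  "equitative agents tau Omega Pi \<longleftrightarrow>
     (\<forall>rho. is_run agents tau Omega Pi rho \<longrightarrow>
        (\<exists>k. \<forall>H \<in> Poss agents tau Omega Pi rho. card (Pi H rho) = k))"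

text \<open>Probability that the random process (uniform draw from Pi H rho while nonempty)
  produces rho as its first |rho| tokens: chain rule over the successive uniform draws.\<close>
definition run_prob :: "(('p \<Rightarrow> 'c set) \<Rightarrow> 'a list \<Rightarrow> 'a set) \<Rightarrow> ('p \<Rightarrow> 'c set) \<Rightarrow> 'a list \<Rightarrow> real" where
  "run_prob Pi H rho =
     (\<Prod>k < length rho. if rho ! k \<in> Pi H (take k rho)
                         then 1 / real (card (Pi H (take k rho))) else 0)"

end

theory Submission
  imports Defs
begin

text \<open>Along an execution every factor of the chain rule is the reciprocal of the number of
  tokens allowed at that point, and equitativity makes these numbers independent of the deal
  among all deals compatible with the run (each prefix of the run is again a run).  Hence
  run_prob is the same positive constant on Poss, while a deal outside Poss has some token of
  the run forbidden, which produces a zero factor.\<close>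

lemma is_execution_take:
  assumes "is_execution agents tau Omega Pi H rho"
  shows "is_execution agents tau Omega Pi H (take k rho)"
  using assms unfolding is_execution_def by (auto simp: min_def)

lemma card_Pi_pos_if_execution:
  assumes "is_execution agents tau Omega Pi H rho" and "k < length rho"
    and "finite (Pi H (take k rho))"
  shows "card (Pi H (take k rho)) > 0"
  using assms unfolding is_execution_def by (auto simp: card_gt_0_iff)

lemma run_prob_execution:
  assumes "is_execution agents tau Omega Pi H rho"
  shows "run_prob Pi H rho = (\<Prod>k < length rho. 1 / real (card (Pi H (take k rho))))"
  using assms unfolding run_prob_def is_execution_def by (intro prod.cong) auto

lemma run_prob_eq_0_if_not_Poss:
  assumes "is_deal agents tau Omega H" and "H \<notin> Poss agents tau Omega Pi rho"
  shows "run_prob Pi H rho = 0"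
proof -
  obtain k where "k < length rho" and "rho ! k \<notin> Pi H (take k rho)"
    using assms unfolding Poss_def is_execution_def by auto
  then show ?thesis
    unfolding run_prob_def by (intro prod_zero) auto
qed

lemma run_prob_execution_pos_le_1:
  assumes exec: "is_execution agents tau Omega Pi H rho"
    and fin: "\<And>r. finite (Pi H r)"
  shows "0 < run_prob Pi H rho \<and> run_prob Pi H rho \<le> 1"
proof -
  have "real (card (Pi H (take k rho))) \<ge> 1" if "k < length rho" for k
    using card_Pi_pos_if_execution[OF exec that fin] by simp
  then show ?thesis
    unfolding run_prob_execution[OF exec]
    by (auto intro!: prod_pos prod_le_1 simp: less_le_trans[OF zero_less_one])
qed

lemma equitative_card_Pi_eq:
  assumes "equitative agents tau Omega Pi"
    and "is_execution agents tau Omega Pi H rho" and "is_execution agents tau Omega Pi H' rho"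
  shows "card (Pi H (take k rho)) = card (Pi H' (take k rho))"
proof -
  have "H \<in> Poss agents tau Omega Pi (take k rho)" and "H' \<in> Poss agents tau Omega Pi (take k rho)"
    using assms(2,3) is_execution_take unfolding Poss_def by blast+
  moreover have "is_run agents tau Omega Pi (take k rho)"
    using assms(2) is_execution_take unfolding is_run_def by blast
  ultimately show ?thesis
    using assms(1) unfolding equitative_def by metis
qed

lemma equitative_run_prob_eq:
  assumes "equitative agents tau Omega Pi"
    and "is_execution agents tau Omega Pi H rho" and "is_execution agents tau Omega Pi H' rho"
  shows "run_prob Pi H rho = run_prob Pi H' rho"
  unfolding run_prob_execution[OF assms(2)] run_prob_execution[OF assms(3)]
  using equitative_card_Pi_eq[OF assms] by simp

theorem mainTheorem3:
  fixes agents :: "'p list" and tau :: "'p \<Rightarrow> nat" and Omega :: "'c set"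
    and Pi :: "('p \<Rightarrow> 'c set) \<Rightarrow> 'a list \<Rightarrow> 'a set" and rho :: "'a list"
  assumes "agents \<noteq> []" and "distinct agents"
    and "\<forall>P \<in> set agents. tau P > 0"
    and "finite Omega" and "card Omega = (\<Sum>P \<leftarrow> agents. tau P)"
    and "is_protocol agents tau Omega Pi"
    and fin: "\<forall>H r. is_deal agents tau Omega H \<longrightarrow> finite (Pi H r)"
    and eq: "equitative agents tau Omega Pi"
    and run: "is_run agents tau Omega Pi rho"
  shows "\<exists>\<gamma>::real. 0 < \<gamma> \<and> \<gamma> \<le> 1 \<and>
           (\<forall>H. is_deal agents tau Omega H \<longrightarrow>
              run_prob Pi H rho = (if H \<in> Poss agents tau Omega Pi rho then \<gamma> else 0))"
proof -
  obtain H0 where H0: "is_execution agents tau Omega Pi H0 rho"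
    using run unfolding is_run_def by blast
  have "0 < run_prob Pi H0 rho \<and> run_prob Pi H0 rho \<le> 1"
    using H0 fin by (intro run_prob_execution_pos_le_1) (auto simp: is_execution_def)
  moreover have "run_prob Pi H rho = (if H \<in> Poss agents tau Omega Pi rho then run_prob Pi H0 rho else 0)"
    if "is_deal agents tau Omega H" for H
    using that run_prob_eq_0_if_not_Poss equitative_run_prob_eq[OF eq _ H0]
    by (auto simp: Poss_def)
  ultimately show ?thesis by blast
qed

end
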